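(* For every constant $c>0$ there exist constants $\epsilon>0$ and $c'>0$ such that for every odd $n$, with $\alpha=c\sqrt n$ and the hockey stick function $hs_\alpha(x)=\min\big(\alpha,\frac{2\alpha}{n}\sum_{i=1}^nx_i\big)$ on $\{0,1\}^n$, it holds that $\mathcal D^{\to,U}_{\epsilon}(hs_\alpha^+)\ge c'n$.
   Context: The XOR-function of $f$ is $f^+(x,y)=f(x+y)$ (coordinatewise addition mod 2). Distributional one-way communication complexity under the uniform distribution: $\mathcal D^{\to,U}_\epsilon(f^+)$ is the minimum, over deterministic one-way protocols $\Pi$ in which Alice (holding $x$) sends a single message to Bob (holding $y$) who outputs a real number $\Pi(x,y)$ depending only on the message and $y$, satisfying $\mathbb E_{x,y\sim U(\mathbb F_2^n)}[(\Pi(x,y)-f^+(x,y))^2]\le\epsilon$, of the maximum message length in bits. *)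

theory Defs
  imports Complex_Main
begin

text \<open>Vectors of F_2^n are represented as boolean lists of length n (True = 1).\<close>
definition cube :: "nat \<Rightarrow> bool list set" where
  "cube n = {xs. length xs = n}"

definition xor_vec :: "bool list \<Rightarrow> bool list \<Rightarrow> bool list" where
  "xor_vec x y = map2 (\<lambda>a b. a \<noteq> b) x y"

definition xor_fun :: "(bool list \<Rightarrow> real) \<Rightarrow> bool list \<Rightarrow> bool list \<Rightarrow> real" where
  "xor_fun f = (\<lambda>x y. f (xor_vec x y))"

definition weight :: "bool list \<Rightarrow> nat" where
  "weight x = length (filter id x)"

definition hockey_stick :: "nat \<Rightarrow> real \<Rightarrow> bool list \<Rightarrow> real" where
  "hockey_stick n \<alpha> x = min \<alpha> (2 * \<alpha> / real n * real (weight x))"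

text \<open>Expected squared error under the uniform distribution on F_2^n x F_2^n of the
  deterministic one-way protocol where Alice sends message M x and Bob outputs B (M x) y.\<close>
definition ow_error ::
  "nat \<Rightarrow> (bool list \<Rightarrow> bool list) \<Rightarrow> (bool list \<Rightarrow> bool list \<Rightarrow> real)
     \<Rightarrow> (bool list \<Rightarrow> bool list \<Rightarrow> real) \<Rightarrow> real" where
  "ow_error n M B F =
     (\<Sum>x\<in>cube n. \<Sum>y\<in>cube n. (B (M x) y - F x y)^2) / (2 ^ n * 2 ^ n)"

definition D_oneway_U :: "nat \<Rightarrow> real \<Rightarrow> (bool list \<Rightarrow> bool list \<Rightarrow> real) \<Rightarrow> nat" where
  "D_oneway_U n \<epsilon> F = (LEAST k. \<exists>M B. (\<forall>x\<in>cube n. length (M x) \<le> k) \<and> ow_error n M B F \<le> \<epsilon>)"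

end

theory Submission
  imports Defs "HOL-Library.Multiset"
begin

text \<open>
  Write g for hs_alpha and chi_i(z) = (-1)^(z_i). Since g depends only on the weight, its
  level-one Fourier coefficients G_i = sum_z g(z) chi_i(z) all equal one number G. Pairing
  each z with the word obtained by flipping its first bit, and using that g gains at least
  alpha/n per unit of weight below n/2, gives |G| >= alpha 2^n / (4n).

  Translating g by x multiplies G_i by chi_i(x). So by Bessel's inequality, Bob, who only
  learns the class A of inputs sharing Alice's message, errs on A by at least the spread of
  the vectors (chi_i(x) G)_i around their best common approximation, which is
  G^2 (n|A| - sum_i (sum_{x in A} chi_i(x))^2 / |A|). The level-one inequality
  sum_i (sum_{x in A} chi_i(x))^2 <= 4 |A|^2 ln(2^n/|A|), an exponential moment estimate, and
  Gibbs' inequality over the N classes then bound the expected squared error below by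
  G^2 (n - 4 ln N) / 4^n >= c^2 (n - 4 ln N) / (16n). Error at most c^2/64 thus forces
  ln N >= 3n/16, i.e. messages of length linear in n.
\<close>

definition chi :: "nat \<Rightarrow> bool list \<Rightarrow> real" where
  "chi i z = (if z ! i then -1 else 1)"

lemma finite_cube [simp]: "finite (cube n)"
  using finite_lists_length_eq[of "UNIV :: bool set" n] by (simp add: cube_def)

lemma card_cube: "card (cube n) = 2 ^ n"
  using card_lists_length_eq[of "UNIV :: bool set" n] by (simp add: cube_def card_UNIV_bool)

lemma cube_0: "cube 0 = {[]}"
  by (auto simp: cube_def)

lemma sum_cube_Suc:
  "(\<Sum>z\<in>cube (Suc n). f z) = (\<Sum>u\<in>cube n. f (False # u) + f (True # u))"
proof -
  have eq: "cube (Suc n) = (\<lambda>u. False # u) ` cube n \<union> (\<lambda>u. True # u) ` cube n"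
    by (auto simp: cube_def length_Suc_conv)
  have "(\<Sum>z\<in>cube (Suc n). f z)
      = (\<Sum>z\<in>(\<lambda>u. False # u) ` cube n. f z) + (\<Sum>z\<in>(\<lambda>u. True # u) ` cube n. f z)"
    unfolding eq by (rule sum.union_disjoint) auto
  also have "\<dots> = (\<Sum>u\<in>cube n. f (False # u)) + (\<Sum>u\<in>cube n. f (True # u))"
    by (simp add: sum.reindex inj_on_def)
  finally show ?thesis by (simp add: sum.distrib)
qed

lemma chi_mult_self [simp]: "chi i z * chi i z = 1"
  by (simp add: chi_def)

lemma abs_chi [simp]: "\<bar>chi i z\<bar> = 1"
  by (simp add: chi_def)

lemma chi_Cons_0: "chi 0 (b # u) = (if b then -1 else 1)"
  by (simp add: chi_def)

lemma chi_Cons_Suc: "chi (Suc i) (b # u) = chi i u"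
  by (simp add: chi_def)

lemma sum_chi_mult_chi:
  assumes "i < n" "j < n"
  shows "(\<Sum>y\<in>cube n. chi i y * chi j y) = (if i = j then 2 ^ n else 0)"
  using assms
proof (induction n arbitrary: i j)
  case 0
  then show ?case by simp
next
  case (Suc n)
  show ?case
  proof (cases i; cases j)
    fix i' j' assume "i = Suc i'" "j = Suc j'"
    with Suc show ?thesis
      by (simp add: sum_cube_Suc chi_Cons_Suc sum_distrib_left[symmetric] card_cube)
  qed (auto simp: sum_cube_Suc chi_Cons_0 chi_Cons_Suc card_cube)
qed

lemma bessel_level_one:
  fixes h :: "bool list \<Rightarrow> real"
  shows "(\<Sum>i<n. (\<Sum>y\<in>cube n. h y * chi i y)\<^sup>2) \<le> 2 ^ n * (\<Sum>y\<in>cube n. (h y)\<^sup>2)"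
proof -
  define c where "c i = (\<Sum>y\<in>cube n. h y * chi i y) / 2 ^ n" for i
  define P where "P y = (\<Sum>i<n. c i * chi i y)" for y
  have coeff: "(\<Sum>y\<in>cube n. h y * chi i y) = 2 ^ n * c i" for i
    by (simp add: c_def)
  have inner_h_P: "(\<Sum>y\<in>cube n. h y * P y) = 2 ^ n * (\<Sum>i<n. (c i)\<^sup>2)"
  proof -
    have "(\<Sum>y\<in>cube n. h y * P y) = (\<Sum>i<n. c i * (\<Sum>y\<in>cube n. h y * chi i y))"
      unfolding P_def
      by (simp add: sum_distrib_left sum_distrib_right mult_ac sum.swap[of _ "cube n"])
    then show ?thesis
      by (simp add: coeff sum_distrib_left power2_eq_square mult_ac)
  qed
  have norm_P: "(\<Sum>y\<in>cube n. (P y)\<^sup>2) = 2 ^ n * (\<Sum>i<n. (c i)\<^sup>2)"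
  proof -
    have "(\<Sum>y\<in>cube n. (P y)\<^sup>2)
        = (\<Sum>i<n. \<Sum>j<n. c i * c j * (\<Sum>y\<in>cube n. chi i y * chi j y))"
      unfolding P_def power2_eq_square
      by (simp add: sum_distrib_left sum_distrib_right mult_ac sum.swap[of _ "cube n"])
    also have "\<dots> = (\<Sum>i<n. \<Sum>j<n. c i * c j * (if i = j then 2 ^ n else 0))"
      by (intro sum.cong refl) (simp add: sum_chi_mult_chi)
    finally show ?thesis
      by (simp add: if_distrib sum_distrib_left power2_eq_square mult_ac cong: if_cong)
  qed
  have "0 \<le> (\<Sum>y\<in>cube n. (h y - P y)\<^sup>2)"
    by (simp add: sum_nonneg)
  also have "\<dots> = (\<Sum>y\<in>cube n. (h y)\<^sup>2) - 2 * (\<Sum>y\<in>cube n. h y * P y) + (\<Sum>y\<in>cube n. (P y)\<^sup>2)"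
    by (simp add: power2_diff sum.distrib sum_subtractf sum_distrib_left mult_ac)
  finally have "2 ^ n * (\<Sum>i<n. (c i)\<^sup>2) \<le> (\<Sum>y\<in>cube n. (h y)\<^sup>2)"
    using inner_h_P norm_P by simp
  then have "2 ^ n * (2 ^ n * (\<Sum>i<n. (c i)\<^sup>2)) \<le> 2 ^ n * (\<Sum>y\<in>cube n. (h y)\<^sup>2)"
    by (rule mult_left_mono) simp
  moreover have "(\<Sum>i<n. (\<Sum>y\<in>cube n. h y * chi i y)\<^sup>2) = 2 ^ n * (2 ^ n * (\<Sum>i<n. (c i)\<^sup>2))"
    by (simp add: coeff power_mult_distrib sum_distrib_left power2_eq_square mult_ac)
  ultimately show ?thesis
    by simp
qed

lemma sum_cube_exp_linear:
  "(\<Sum>x\<in>cube n. exp (\<Sum>i<n. v i * chi i x)) = (\<Prod>i<n. exp (v i) + exp (- v i))"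
proof (induction n arbitrary: v)
  case 0
  then show ?case by (simp add: cube_0)
next
  case (Suc n)
  have split_first: "(\<Sum>i<Suc n. v i * chi i (b # u))
      = (if b then - v 0 else v 0) + (\<Sum>i<n. v (Suc i) * chi i u)" for b u
    by (simp only: sum.lessThan_Suc_shift chi_Cons_Suc chi_Cons_0) simp
  have "(\<Sum>x\<in>cube (Suc n). exp (\<Sum>i<Suc n. v i * chi i x))
      = (\<Sum>u\<in>cube n. (exp (v 0) + exp (- v 0)) * exp (\<Sum>i<n. v (Suc i) * chi i u))"
    by (simp only: sum_cube_Suc split_first if_False if_True exp_add distrib_right)
  also have "\<dots> = (exp (v 0) + exp (- v 0)) * (\<Sum>u\<in>cube n. exp (\<Sum>i<n. v (Suc i) * chi i u))"
    by (simp add: sum_distrib_left)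
  also have "\<dots> = (exp (v 0) + exp (- v 0)) * (\<Prod>i<n. exp (v (Suc i)) + exp (- v (Suc i)))"
    by (simp add: Suc.IH)
  finally show ?case
    by (simp only: prod.lessThan_Suc_shift)
qed

lemma exp_plus_exp_minus_le:
  fixes t :: real
  assumes "\<bar>t\<bar> \<le> 1"
  shows "exp t + exp (- t) \<le> 2 * exp (t\<^sup>2)"
proof -
  have nonneg_case: "exp s + exp (- s) \<le> 2 * exp (s\<^sup>2)" if "0 \<le> s" "s \<le> 1" for s :: real
  proof -
    have "1 \<le> (1 + s) * (1 - s + s\<^sup>2)"
      using that by (simp add: algebra_simps power2_eq_square power3_eq_cube)
    also have "\<dots> \<le> exp s * (1 - s + s\<^sup>2)"
      using that by (intro mult_right_mono) (auto simp: power2_eq_square)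
    finally have "exp (- s) \<le> 1 - s + s\<^sup>2"
      by (simp add: exp_minus field_simps)
    moreover have "exp s \<le> 1 + s + s\<^sup>2"
      using exp_bound[OF that] .
    moreover have "1 + s\<^sup>2 \<le> exp (s\<^sup>2)"
      by simp
    ultimately show ?thesis by linarith
  qed
  show ?thesis
    using nonneg_case[of t] nonneg_case[of "- t"] assms by (cases "t \<ge> 0") (auto simp: add.commute)
qed

lemma sum_cube_exp_linear_le:
  assumes "\<And>i. i < n \<Longrightarrow> \<bar>v i\<bar> \<le> 1"
  shows "(\<Sum>x\<in>cube n. exp (\<Sum>i<n. v i * chi i x)) \<le> 2 ^ n * exp (\<Sum>i<n. (v i)\<^sup>2)"
proof -
  have "(\<Sum>x\<in>cube n. exp (\<Sum>i<n. v i * chi i x)) = (\<Prod>i<n. exp (v i) + exp (- v i))"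
    by (rule sum_cube_exp_linear)
  also have "\<dots> \<le> (\<Prod>i<n. 2 * exp ((v i)\<^sup>2))"
    by (intro prod_mono conjI add_nonneg_nonneg exp_plus_exp_minus_le) (auto simp: assms less_imp_le)
  also have "\<dots> = 2 ^ n * exp (\<Sum>i<n. (v i)\<^sup>2)"
    by (simp add: prod.distrib exp_sum)
  finally show ?thesis .
qed

lemma card_mult_exp_mean_le_sum_exp:
  fixes f :: "'a \<Rightarrow> real"
  assumes "finite A" "A \<noteq> {}"
  shows "card A * exp ((\<Sum>x\<in>A. f x) / card A) \<le> (\<Sum>x\<in>A. exp (f x))"
proof -
  define q where "q = (\<Sum>x\<in>A. f x) / card A"
  have card_pos: "real (card A) > 0"
    using assms by (simp add: card_gt_0_iff)
  \<comment> \<open>tangent line of \<open>exp\<close> at the mean\<close>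
  have "(\<Sum>x\<in>A. exp q * (1 + (f x - q))) \<le> (\<Sum>x\<in>A. exp (f x))"
  proof (rule sum_mono)
    fix x
    have "exp q * (1 + (f x - q)) \<le> exp q * exp (f x - q)"
      by (simp add: exp_ge_add_one_self)
    then show "exp q * (1 + (f x - q)) \<le> exp (f x)"
      by (simp add: exp_diff)
  qed
  moreover have "(\<Sum>x\<in>A. exp q * (1 + (f x - q))) = exp q * (card A + (\<Sum>x\<in>A. f x) - card A * q)"
    by (simp add: sum_distrib_left[symmetric] sum.distrib sum_subtractf)
  moreover have "card A * q = (\<Sum>x\<in>A. f x)"
    using card_pos by (simp add: q_def)
  ultimately show ?thesis
    by (simp add: q_def[symmetric] mult.commute)
qed

lemma level_one_inequality:
  assumes "A \<subseteq> cube n" "A \<noteq> {}"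
  shows "(\<Sum>i<n. (\<Sum>x\<in>A. chi i x)\<^sup>2) \<le> 4 * (card A)\<^sup>2 * ln (2 ^ n / card A)"
proof -
  have fin: "finite A"
    using assms(1) by (rule finite_subset) simp
  define a where "a = real (card A)"
  define S where "S i = (\<Sum>x\<in>A. chi i x)" for i
  define T where "T = (\<Sum>i<n. (S i)\<^sup>2)"
  define v where "v i = S i / (2 * a)" for i
  have a_pos: "a > 0"
    using assms fin by (simp add: a_def card_gt_0_iff)
  have "\<bar>S i\<bar> \<le> (\<Sum>x\<in>A. \<bar>chi i x\<bar>)" for i
    unfolding S_def by (rule sum_abs)
  then have S_le: "\<bar>S i\<bar> \<le> a" for i
    by (simp add: a_def)
  have v_le: "\<bar>v i\<bar> \<le> 1" for i
  proof -
    have "\<bar>S i\<bar> \<le> 2 * a"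
      using S_le[of i] a_pos by linarith
    then show ?thesis
      using a_pos by (simp add: v_def abs_divide)
  qed
  have "(\<Sum>x\<in>A. \<Sum>i<n. v i * chi i x) = (\<Sum>i<n. v i * S i)"
    by (simp add: S_def sum.swap[of _ A] sum_distrib_left)
  also have "\<dots> = (\<Sum>i<n. (S i)\<^sup>2 / (2 * a))"
    by (simp add: v_def power2_eq_square)
  finally have sum_exponent: "(\<Sum>x\<in>A. \<Sum>i<n. v i * chi i x) / a = T / (2 * a\<^sup>2)"
    by (simp add: T_def sum_divide_distrib[symmetric] power2_eq_square)
  have sum_v_sq: "(\<Sum>i<n. (v i)\<^sup>2) = T / (4 * a\<^sup>2)"
    by (simp add: v_def T_def power_divide sum_divide_distrib power_mult_distrib)
  have "a * exp (T / (2 * a\<^sup>2)) \<le> (\<Sum>x\<in>A. exp (\<Sum>i<n. v i * chi i x))"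
    using card_mult_exp_mean_le_sum_exp[OF fin assms(2), of "\<lambda>x. \<Sum>i<n. v i * chi i x"]
    by (simp add: a_def[symmetric] sum_exponent)
  also have "\<dots> \<le> (\<Sum>x\<in>cube n. exp (\<Sum>i<n. v i * chi i x))"
    by (rule sum_mono2) (use assms in auto)
  also have "\<dots> \<le> 2 ^ n * exp (T / (4 * a\<^sup>2))"
    using sum_cube_exp_linear_le[of n v] v_le by (simp add: sum_v_sq)
  finally have "ln (a * exp (T / (2 * a\<^sup>2))) \<le> ln (2 ^ n * exp (T / (4 * a\<^sup>2)))"
    using a_pos by simp
  then have "T / (2 * a\<^sup>2) - T / (4 * a\<^sup>2) \<le> ln (2 ^ n / a)"
    using a_pos by (simp add: ln_mult ln_div)
  moreover have "T / (2 * a\<^sup>2) - T / (4 * a\<^sup>2) = T / (4 * a\<^sup>2)"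
    using a_pos by (simp add: field_simps)
  ultimately have "T \<le> 4 * a\<^sup>2 * ln (2 ^ n / a)"
    using a_pos by (simp add: field_simps)
  then show ?thesis
    by (simp add: T_def S_def a_def)
qed

lemma sum_sq_dist_ge_of_const_sq:
  fixes a :: "'a \<Rightarrow> real" and s \<beta> :: real
  assumes "finite A" "A \<noteq> {}" "\<And>x. x \<in> A \<Longrightarrow> (a x)\<^sup>2 = s"
  shows "card A * s - (\<Sum>x\<in>A. a x)\<^sup>2 / card A \<le> (\<Sum>x\<in>A. (\<beta> - a x)\<^sup>2)"
proof -
  define K where "K = real (card A)"
  define \<sigma> where "\<sigma> = (\<Sum>x\<in>A. a x)"
  have K: "K > 0"
    using assms by (simp add: K_def card_gt_0_iff)
  have "(\<Sum>x\<in>A. (\<beta> - a x)\<^sup>2) = K * \<beta>\<^sup>2 - 2 * \<beta> * \<sigma> + K * s"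
    using assms(3) by (simp add: power2_diff sum.distrib sum_subtractf sum_distrib_left
        sum_distrib_right K_def \<sigma>_def mult_ac distrib_left)
  moreover have "K * \<beta>\<^sup>2 - 2 * \<beta> * \<sigma> + \<sigma>\<^sup>2 / K = (K * \<beta> - \<sigma>)\<^sup>2 / K"
    using K by (simp add: power2_diff field_simps power2_eq_square)
  moreover have "0 \<le> (K * \<beta> - \<sigma>)\<^sup>2 / K"
    using K by simp
  ultimately have "K * s - \<sigma>\<^sup>2 / K \<le> (\<Sum>x\<in>A. (\<beta> - a x)\<^sup>2)"
    by linarith
  then show ?thesis
    by (simp add: K_def \<sigma>_def)
qed

lemma sum_mult_ln_le_mult_ln_card:
  fixes a :: "'a \<Rightarrow> real"
  assumes "finite I" "\<And>i. i \<in> I \<Longrightarrow> a i > 0" "(\<Sum>i\<in>I. a i) = K"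
  shows "(\<Sum>i\<in>I. a i * ln (K / a i)) \<le> K * ln (card I)"
proof (cases "I = {}")
  case True
  then show ?thesis using assms by simp
next
  case False
  define N where "N = real (card I)"
  have N: "N > 0"
    using False assms by (simp add: N_def card_gt_0_iff)
  have K: "K > 0"
    using assms False by (metis sum_pos)
  have "(\<Sum>i\<in>I. a i * ln (K / a i)) - K * ln N = (\<Sum>i\<in>I. a i * ln (K / (N * a i)))"
  proof -
    have "(\<Sum>i\<in>I. a i * ln (K / (N * a i))) = (\<Sum>i\<in>I. a i * ln (K / a i) - a i * ln N)"
      by (intro sum.cong refl) (use assms N K in \<open>simp add: ln_div ln_mult algebra_simps\<close>)
    then show ?thesis
      by (simp add: sum_subtractf sum_distrib_right[symmetric] assms(3))
  qed
  also have "\<dots> \<le> (\<Sum>i\<in>I. a i * (K / (N * a i) - 1))"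
    by (intro sum_mono mult_left_mono ln_le_minus_one) (use assms N K in \<open>auto intro: less_imp_le\<close>)
  also have "\<dots> = (\<Sum>i\<in>I. K / N - a i)"
  proof (rule sum.cong[OF refl])
    fix i assume "i \<in> I"
    then show "a i * (K / (N * a i) - 1) = K / N - a i"
      using assms(2)[of i] N by (auto simp: field_simps)
  qed
  also have "\<dots> = 0"
    using N by (simp add: sum_subtractf assms(3) N_def)
  finally show ?thesis
    by (simp add: N_def)
qed

lemma length_xor_vec: "length (xor_vec x y) = min (length x) (length y)"
  by (simp add: xor_vec_def)

lemma xor_vec_cancel: "length x = length y \<Longrightarrow> xor_vec x (xor_vec x y) = y"
  by (induction x y rule: list_induct2) (auto simp: xor_vec_def)

lemma chi_xor_vec:
  "i < length x \<Longrightarrow> i < length y \<Longrightarrow> chi i (xor_vec x y) = chi i x * chi i y"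
  by (simp add: chi_def xor_vec_def)

lemma sum_translate_mult_chi:
  assumes "x \<in> cube n" "i < n"
  shows "(\<Sum>y\<in>cube n. g (xor_vec x y) * chi i y) = chi i x * (\<Sum>z\<in>cube n. g z * chi i z)"
proof -
  have "(\<Sum>y\<in>cube n. g (xor_vec x y) * chi i y) = (\<Sum>z\<in>cube n. g z * chi i (xor_vec x z))"
    by (rule sum.reindex_bij_witness[where i="xor_vec x" and j="xor_vec x"])
       (use assms in \<open>auto simp: cube_def xor_vec_cancel length_xor_vec\<close>)
  also have "\<dots> = (\<Sum>z\<in>cube n. chi i x * (g z * chi i z))"
    by (intro sum.cong refl) (use assms in \<open>auto simp: cube_def chi_xor_vec\<close>)
  finally show ?thesis
    by (simp add: sum_distrib_left)
qed

lemma sum_sq_translate_error_ge: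
  fixes g b :: "bool list \<Rightarrow> real" and G :: real
  assumes G: "\<And>i. i < n \<Longrightarrow> (\<Sum>z\<in>cube n. g z * chi i z) = G" and x: "x \<in> cube n"
  shows "(\<Sum>i<n. ((\<Sum>y\<in>cube n. b y * chi i y) - chi i x * G)\<^sup>2)
           \<le> 2 ^ n * (\<Sum>y\<in>cube n. (b y - g (xor_vec x y))\<^sup>2)"
proof -
  have "(\<Sum>y\<in>cube n. (b y - g (xor_vec x y)) * chi i y) = (\<Sum>y\<in>cube n. b y * chi i y) - chi i x * G"
    if "i < n" for i
    using sum_translate_mult_chi[OF x that, of g] G[OF that]
    by (simp add: left_diff_distrib sum_subtractf)
  then have "(\<Sum>i<n. ((\<Sum>y\<in>cube n. b y * chi i y) - chi i x * G)\<^sup>2)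
      = (\<Sum>i<n. (\<Sum>y\<in>cube n. (b y - g (xor_vec x y)) * chi i y)\<^sup>2)"
    by simp
  then show ?thesis
    using bessel_level_one[where n=n and h="\<lambda>y. b y - g (xor_vec x y)"] by simp
qed

lemma sum_sq_fiber_error_ge:
  fixes G :: real and \<beta> :: "nat \<Rightarrow> real"
  assumes "A \<subseteq> cube n" "A \<noteq> {}"
  shows "G\<^sup>2 * card A * (n - 4 * ln (2 ^ n / card A))
           \<le> (\<Sum>x\<in>A. \<Sum>i<n. (\<beta> i - chi i x * G)\<^sup>2)"
proof -
  have fin: "finite A"
    using assms(1) by (rule finite_subset) simp
  define a where "a = real (card A)"
  define S where "S i = (\<Sum>x\<in>A. chi i x)" for i
  have a_pos: "a > 0"
    using assms fin by (simp add: a_def card_gt_0_iff)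
  have per_coord: "a * G\<^sup>2 - G\<^sup>2 * (S i)\<^sup>2 / a \<le> (\<Sum>x\<in>A. (\<beta> i - chi i x * G)\<^sup>2)" for i
  proof -
    have "(\<Sum>x\<in>A. chi i x * G) = S i * G"
      by (simp add: S_def sum_distrib_right)
    then show ?thesis
      using sum_sq_dist_ge_of_const_sq[OF fin assms(2), of "\<lambda>x. chi i x * G" "G\<^sup>2" "\<beta> i"]
      by (simp add: a_def power_mult_distrib chi_def mult_ac)
  qed
  have "G\<^sup>2 * (\<Sum>i<n. (S i)\<^sup>2) / a \<le> G\<^sup>2 * (4 * a\<^sup>2 * ln (2 ^ n / a)) / a"
    using level_one_inequality[OF assms] a_pos
    by (intro divide_right_mono mult_left_mono) (simp_all add: S_def a_def)
  also have "\<dots> = G\<^sup>2 * a * (4 * ln (2 ^ n / a))"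
    using a_pos by (simp add: power2_eq_square)
  finally have "G\<^sup>2 * a * (n - 4 * ln (2 ^ n / a)) \<le> (\<Sum>i<n. a * G\<^sup>2 - G\<^sup>2 * (S i)\<^sup>2 / a)"
    by (simp add: sum_subtractf sum_divide_distrib[symmetric] sum_distrib_left[symmetric]
        algebra_simps)
  also have "\<dots> \<le> (\<Sum>i<n. \<Sum>x\<in>A. (\<beta> i - chi i x * G)\<^sup>2)"
    by (intro sum_mono per_coord)
  finally show ?thesis
    by (simp add: a_def sum.swap[of _ A])
qed

lemma ow_error_xor_fun_ge:
  fixes M :: "bool list \<Rightarrow> bool list" and B :: "bool list \<Rightarrow> bool list \<Rightarrow> real"
  assumes G: "\<And>i. i < n \<Longrightarrow> (\<Sum>z\<in>cube n. g z * chi i z) = G"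
  shows "G\<^sup>2 * (n - 4 * ln (card (M ` cube n))) / 4 ^ n \<le> ow_error n M B (xor_fun g)"
proof -
  define X where "X = cube n"
  define A where "A m = {x\<in>X. M x = m}" for m
  define \<beta> where "\<beta> m i = (\<Sum>y\<in>X. B m y * chi i y)" for m i
  define K :: real where "K = 2 ^ n"
  have fin: "finite X"
    by (simp add: X_def)
  have A_sub: "A m \<subseteq> cube n" for m
    by (auto simp: A_def X_def)
  have A_ne: "m \<in> M ` X \<Longrightarrow> A m \<noteq> {}" for m
    by (auto simp: A_def)
  have card_A_pos: "m \<in> M ` X \<Longrightarrow> real (card (A m)) > 0" for m
    using A_ne fin by (simp add: A_def card_gt_0_iff)
  have group: "(\<Sum>x\<in>X. f x) = (\<Sum>m\<in>M ` X. \<Sum>x\<in>A m. f x)" for f :: "bool list \<Rightarrow> real"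
    unfolding A_def by (rule sum.image_gen[OF fin])
  have sum_card_A: "(\<Sum>m\<in>M ` X. real (card (A m))) = K"
    using group[of "\<lambda>_. 1"] by (simp add: X_def K_def card_cube)
  have "G\<^sup>2 * K * (n - 4 * ln (card (M ` X)))
      = G\<^sup>2 * (n * K - 4 * (K * ln (card (M ` X))))"
    by (simp add: algebra_simps)
  also have "\<dots> \<le> G\<^sup>2 * (n * K - 4 * (\<Sum>m\<in>M ` X. card (A m) * ln (K / card (A m))))"
    using sum_mult_ln_le_mult_ln_card[OF finite_imageI[OF fin] card_A_pos sum_card_A]
    by (intro mult_left_mono) simp_all
  also have "\<dots> = G\<^sup>2 * (n * (\<Sum>m\<in>M ` X. real (card (A m)))
      - 4 * (\<Sum>m\<in>M ` X. card (A m) * ln (K / card (A m))))"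
    by (simp add: sum_card_A)
  also have "\<dots> = (\<Sum>m\<in>M ` X. G\<^sup>2 * card (A m) * (n - 4 * ln (K / card (A m))))"
    by (simp add: sum_subtractf sum_distrib_left right_diff_distrib mult_ac)
  also have "\<dots> \<le> (\<Sum>m\<in>M ` X. \<Sum>x\<in>A m. \<Sum>i<n. (\<beta> m i - chi i x * G)\<^sup>2)"
  proof (rule sum_mono)
    fix m assume "m \<in> M ` X"
    then show "G\<^sup>2 * card (A m) * (n - 4 * ln (K / card (A m)))
        \<le> (\<Sum>x\<in>A m. \<Sum>i<n. (\<beta> m i - chi i x * G)\<^sup>2)"
      unfolding K_def by (rule sum_sq_fiber_error_ge[OF A_sub A_ne])
  qed
  also have "\<dots> = (\<Sum>x\<in>X. \<Sum>i<n. (\<beta> (M x) i - chi i x * G)\<^sup>2)"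
    unfolding group[of "\<lambda>x. \<Sum>i<n. (\<beta> (M x) i - chi i x * G)\<^sup>2"]
    by (intro sum.cong refl) (simp add: A_def)
  also have "\<dots> \<le> (\<Sum>x\<in>X. K * (\<Sum>y\<in>X. (B (M x) y - g (xor_vec x y))\<^sup>2))"
    by (intro sum_mono) (simp add: \<beta>_def K_def X_def sum_sq_translate_error_ge[OF G])
  also have "\<dots> = K * (4 ^ n * ow_error n M B (xor_fun g))"
    by (simp add: ow_error_def X_def xor_fun_def sum_distrib_left[symmetric]
        power_mult_distrib[symmetric])
  finally have "G\<^sup>2 * (n - 4 * ln (card (M ` X))) \<le> 4 ^ n * ow_error n M B (xor_fun g)"
    by (simp add: K_def mult.assoc)
  then show ?thesis
    by (simp add: X_def field_simps)
qed

lemma weight_eq_count_mset: "weight x = count (mset x) True"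
  by (induction x) (auto simp: weight_def)

definition swap_coords :: "nat \<Rightarrow> nat \<Rightarrow> bool list \<Rightarrow> bool list" where
  "swap_coords i j z = z[i := z ! j, j := z ! i]"

lemma length_swap_coords [simp]: "length (swap_coords i j z) = length z"
  by (simp add: swap_coords_def)

lemma weight_swap_coords:
  "i < length z \<Longrightarrow> j < length z \<Longrightarrow> weight (swap_coords i j z) = weight z"
  by (simp add: weight_eq_count_mset swap_coords_def mset_swap)

lemma swap_coords_swap_coords:
  "i < length z \<Longrightarrow> j < length z \<Longrightarrow> swap_coords i j (swap_coords i j z) = z"
  by (rule nth_equalityI) (auto simp: swap_coords_def nth_list_update)

lemma chi_swap_coords:
  assumes "i < length z" "j < length z"
  shows "chi i (swap_coords i j z) = chi j z" "chi j (swap_coords i j z) = chi i z"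
  using assms by (simp_all add: swap_coords_def chi_def nth_list_update)

lemma sum_weight_fun_mult_chi_eq:
  assumes "i < n" "j < n"
  shows "(\<Sum>z\<in>cube n. H (weight z) * chi i z) = (\<Sum>z\<in>cube n. H (weight z) * chi j z)"
  by (rule sum.reindex_bij_witness[where i="swap_coords i j" and j="swap_coords i j"])
     (use assms in \<open>auto simp: cube_def swap_coords_swap_coords weight_swap_coords chi_swap_coords\<close>)

lemma weight_Cons: "weight (b # u) = weight u + (if b then 1 else 0)"
  by (simp add: weight_def)

lemma weight_le_length: "weight u \<le> length u"
  by (simp add: weight_def)

lemma weight_map_Not: "weight (map Not u) = length u - weight u"
  by (induction u) (auto simp: weight_def Suc_diff_le)

lemma card_cube_weight_le_half: "2 ^ (2 * m) \<le> 2 * card {u \<in> cube (2 * m). weight u \<le> m}"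
proof -
  define P where "P = {u \<in> cube (2 * m). weight u \<le> m}"
  define Q where "Q = {u \<in> cube (2 * m). m \<le> weight u}"
  have to_P: "map Not u \<in> P" if "u \<in> Q" for u
    using that weight_le_length[of u] by (auto simp: P_def Q_def cube_def weight_map_Not)
  have to_Q: "map Not u \<in> Q" if "u \<in> P" for u
    using that weight_le_length[of u] by (auto simp: P_def Q_def cube_def weight_map_Not)
  have "bij_betw (map Not) Q P"
    by (rule bij_betw_byWitness[where f'="map Not"]) (simp_all add: image_subsetI to_P to_Q comp_def)
  then have "card Q = card P"
    by (rule bij_betw_same_card)
  moreover have "cube (2 * m) = P \<union> Q"
    by (auto simp: P_def Q_def)
  then have "card (cube (2 * m)) \<le> card P + card Q"
    by (metis card_Un_le)
  ultimately show ?thesis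
    by (simp add: card_cube P_def)
qed

lemma min_linear_increment_ge:
  fixes \<alpha> N w :: real
  assumes "\<alpha> \<ge> 0" "N > 0"
  shows "(if 2 * w + 1 \<le> N then \<alpha> / N else 0)
           \<le> min \<alpha> (2 * \<alpha> / N * (w + 1)) - min \<alpha> (2 * \<alpha> / N * w)"
proof -
  have slope: "2 * \<alpha> / N * (w + 1) = 2 * \<alpha> / N * w + 2 * \<alpha> / N" "0 \<le> \<alpha> / N"
    using assms by (simp_all add: field_simps)
  show ?thesis
  proof (cases "2 * w + 1 \<le> N")
    case True
    then have "\<alpha> * (2 * w + 1) \<le> \<alpha> * N"
      using assms(1) by (rule mult_left_mono)
    then have "2 * \<alpha> / N * w + \<alpha> / N \<le> \<alpha>"
      using assms(2) by (simp add: field_simps)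
    with True slope show ?thesis
      by auto
  qed (use slope in auto)
qed

lemma hockey_stick_coeff_le:
  assumes n: "n = 2 * m + 1" and "\<alpha> \<ge> 0"
  shows "(\<Sum>z\<in>cube n. hockey_stick n \<alpha> z * chi 0 z) \<le> - (\<alpha> * 2 ^ n / (4 * real n))"
proof -
  define H where "H w = min \<alpha> (2 * \<alpha> / real n * real w)" for w :: nat
  define L where "L = {u \<in> cube (2 * m). weight u \<le> m}"
  have n_pos: "real n > 0"
    using n by simp
  have "hockey_stick n \<alpha> z = H (weight z)" for z
    by (simp add: hockey_stick_def H_def)
  then have "(\<Sum>z\<in>cube n. hockey_stick n \<alpha> z * chi 0 z) = (\<Sum>z\<in>cube n. H (weight z) * chi 0 z)"
    by simp
  also have "\<dots> = (\<Sum>u\<in>cube (2 * m). H (weight u) - H (weight u + 1))"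
    unfolding n by (simp add: sum_cube_Suc weight_Cons chi_Cons_0)
  also have "\<dots> \<le> - (\<Sum>u\<in>cube (2 * m). if weight u \<le> m then \<alpha> / n else 0)"
  proof -
    have step: "(if weight u \<le> m then \<alpha> / n else 0) \<le> H (weight u + 1) - H (weight u)" for u
      using min_linear_increment_ge[OF assms(2) n_pos, of "real (weight u)"] n
      by (simp add: H_def add.commute)
    show ?thesis
      unfolding sum_negf[symmetric]
    proof (rule sum_mono)
      fix u
      show "H (weight u) - H (weight u + 1) \<le> - (if weight u \<le> m then \<alpha> / n else 0)"
        using step[of u] by linarith
    qed
  qed
  also have "\<dots> = - (\<alpha> / n * card L)"
    by (simp add: sum.If_cases L_def Int_def conj_commute)
  also have "\<dots> \<le> - (\<alpha> / n * (2 ^ (2 * m) / 2))"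
  proof -
    have "real (2 ^ (2 * m)) \<le> real (2 * card L)"
      using card_cube_weight_le_half[of m] unfolding L_def of_nat_le_iff .
    then have "\<alpha> / n * (2 ^ (2 * m) / 2) \<le> \<alpha> / n * card L"
      using assms(2) by (intro mult_left_mono) simp_all
    then show ?thesis
      by linarith
  qed
  also have "\<dots> = - (\<alpha> * 2 ^ n / (4 * real n))"
    using n by (simp add: field_simps power_add)
  finally show ?thesis .
qed

lemma card_image_lt_of_length_le:
  fixes M :: "'a \<Rightarrow> bool list"
  assumes "\<forall>x\<in>X. length (M x) \<le> D"
  shows "card (M ` X) < 2 ^ Suc D"
proof -
  have geometric: "(\<Sum>i\<le>k. 2 ^ i) < (2 :: nat) ^ Suc k" for k
    by (induction k) auto
  have "M ` X \<subseteq> {xs. set xs \<subseteq> UNIV \<and> length xs \<le> D}"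
    using assms by auto
  then have "card (M ` X) \<le> card {xs :: bool list. set xs \<subseteq> UNIV \<and> length xs \<le> D}"
    by (rule card_mono[rotated]) (rule finite_lists_length_le, simp)
  also have "\<dots> = (\<Sum>i\<le>D. 2 ^ i)"
    by (subst card_lists_length_le) simp_all
  also have "\<dots> < 2 ^ Suc D"
    by (rule geometric)
  finally show ?thesis .
qed

lemma D_oneway_U_attained:
  assumes "\<epsilon> \<ge> 0"
  obtains M B where "\<forall>x\<in>cube n. length (M x) \<le> D_oneway_U n \<epsilon> F" "ow_error n M B F \<le> \<epsilon>"
proof -
  \<comment> \<open>Alice can send her whole input\<close>
  have "\<exists>k M B. (\<forall>x\<in>cube n. length (M x) \<le> k) \<and> ow_error n M B F \<le> \<epsilon>"
    using assms by (intro exI[of _ n] exI[of _ id] exI[of _ F]) (simp add: ow_error_def cube_def)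
  then have "\<exists>M B. (\<forall>x\<in>cube n. length (M x) \<le> D_oneway_U n \<epsilon> F) \<and> ow_error n M B F \<le> \<epsilon>"
    unfolding D_oneway_U_def by (rule LeastI_ex)
  then show ?thesis
    using that by blast
qed

lemma hockey_stick_coeff_sq_ge:
  assumes "odd n" "c \<ge> 0"
  shows "c\<^sup>2 / (16 * n) * 4 ^ n \<le> (\<Sum>z\<in>cube n. hockey_stick n (c * sqrt n) z * chi 0 z)\<^sup>2"
proof -
  define \<alpha> where "\<alpha> = c * sqrt n"
  obtain m where n: "n = 2 * m + 1"
    using \<open>odd n\<close> oddE by blast
  have n_pos: "real n > 0"
    using n by simp
  have \<alpha>: "\<alpha> \<ge> 0" "\<alpha>\<^sup>2 = c\<^sup>2 * n"
    using assms(2) by (simp_all add: \<alpha>_def power_mult_distrib)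
  have four: "(2::real) ^ n * 2 ^ n = 4 ^ n"
    by (simp add: power_mult_distrib[symmetric])
  have "c\<^sup>2 / (16 * n) * 4 ^ n = c\<^sup>2 * n * 4 ^ n / (16 * n\<^sup>2)"
    using n_pos by (simp add: power2_eq_square)
  also have "\<dots> = \<alpha>\<^sup>2 * (2 ^ n * 2 ^ n) / (16 * n\<^sup>2)"
    by (simp only: four \<alpha>(2))
  also have "\<dots> = (\<alpha> * 2 ^ n / (4 * n))\<^sup>2"
    by (simp add: power_mult_distrib power_divide power2_eq_square)
  also have "\<dots> \<le> (- (\<Sum>z\<in>cube n. hockey_stick n \<alpha> z * chi 0 z))\<^sup>2"
    using hockey_stick_coeff_le[OF n \<alpha>(1)] \<alpha>(1) by (intro power_mono) simp_all
  finally show ?thesis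
    by (simp add: \<alpha>_def)
qed

lemma ln_card_messages_ge:
  fixes M :: "bool list \<Rightarrow> bool list" and B :: "bool list \<Rightarrow> bool list \<Rightarrow> real"
  assumes c: "c > 0" and "odd n"
    and err: "ow_error n M B (xor_fun (hockey_stick n (c * sqrt n))) \<le> c\<^sup>2 / 64"
  shows "3 * n / 16 \<le> ln (card (M ` cube n))"
proof -
  define g where "g = hockey_stick n (c * sqrt n)"
  define G where "G = (\<Sum>z\<in>cube n. g z * chi 0 z)"
  define N where "N = card (M ` cube n)"
  have n_pos: "real n > 0"
    using \<open>odd n\<close> by (simp add: odd_pos)
  have "(\<Sum>z\<in>cube n. g z * chi i z) = G" if "i < n" for i
    using sum_weight_fun_mult_chi_eq[OF that, of 0] \<open>odd n\<close>
    by (simp add: G_def g_def hockey_stick_def odd_pos)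
  then have "G\<^sup>2 * (n - 4 * ln N) / 4 ^ n \<le> ow_error n M B (xor_fun g)"
    unfolding N_def by (rule ow_error_xor_fun_ge)
  then have err_ge: "G\<^sup>2 * (n - 4 * ln N) / 4 ^ n \<le> c\<^sup>2 / 64"
    using err[folded g_def] by (rule order_trans)
  have coeff_ge: "c\<^sup>2 / (16 * n) \<le> G\<^sup>2 / 4 ^ n"
    using hockey_stick_coeff_sq_ge[OF \<open>odd n\<close>, of c] c by (simp add: G_def g_def field_simps)
  have "\<not> n / 4 < n - 4 * ln N"
  proof
    assume slack: "n / 4 < n - 4 * ln N"
    have "c\<^sup>2 / 64 = c\<^sup>2 / (16 * n) * (n / 4)"
      using n_pos by simp
    also have "\<dots> < c\<^sup>2 / (16 * n) * (n - 4 * ln N)"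
      using slack c n_pos by (intro mult_strict_left_mono) simp_all
    also have "\<dots> \<le> G\<^sup>2 / 4 ^ n * (n - 4 * ln N)"
      using coeff_ge slack n_pos by (intro mult_right_mono) simp_all
    also have "\<dots> \<le> c\<^sup>2 / 64"
      using err_ge by simp
    finally show False
      by simp
  qed
  then show ?thesis
    by (simp add: N_def)
qed

lemma D_oneway_U_hockey_stick_ge:
  assumes c: "c > 0" and "odd n"
  shows "3 / 32 * n \<le> real (D_oneway_U n (c\<^sup>2 / 64) (xor_fun (hockey_stick n (c * sqrt n))))"
    (is "_ \<le> real ?D")
proof -
  obtain M B where len: "\<forall>x\<in>cube n. length (M x) \<le> ?D"
    and err: "ow_error n M B (xor_fun (hockey_stick n (c * sqrt n))) \<le> c\<^sup>2 / 64"
    using D_oneway_U_attained[of "c\<^sup>2 / 64"] zero_le_power2[of c] by (metis divide_nonneg_pos zero_less_numeral)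
  define N where "N = card (M ` cube n)"
  have n_pos: "real n > 0"
    using \<open>odd n\<close> by (simp add: odd_pos)
  have ln_N: "3 * n / 16 \<le> ln N"
    using ln_card_messages_ge[OF c \<open>odd n\<close> err] by (simp add: N_def)
  have N_lt: "N < 2 ^ Suc ?D"
    using card_image_lt_of_length_le[OF len] by (simp add: N_def)
  have N_gt_1: "N > 1"
    using ln_N n_pos by (cases "N \<le> 1") (auto simp: le_Suc_eq)
  moreover have "real N < 2 ^ Suc ?D"
    using N_lt by (metis of_nat_less_iff of_nat_numeral of_nat_power)
  ultimately have "ln N < ln (2 ^ Suc ?D)"
    by simp
  also have "\<dots> = Suc ?D * ln 2"
    by (rule ln_realpow)
  also have "\<dots> \<le> Suc ?D"
    using ln_le_minus_one[of 2] by simp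
  finally have "3 * n / 16 < Suc ?D"
    using ln_N by linarith
  moreover have "?D \<noteq> 0"
    using N_lt N_gt_1 by (intro notI) simp
  ultimately show ?thesis
    by linarith
qed

theorem mainTheorem19:
  fixes c :: real
  assumes "c > 0"
  shows "\<exists>\<epsilon>>0. \<exists>c'>0. \<forall>n::nat. odd n \<longrightarrow>
           real (D_oneway_U n \<epsilon> (xor_fun (hockey_stick n (c * sqrt (real n))))) \<ge> c' * real n"
proof (rule exI[of _ "c\<^sup>2 / 64"], intro conjI exI[of _ "3 / 32"] allI impI)
  fix n :: nat
  assume "odd n"
  then show "3 / 32 * real n \<le> real (D_oneway_U n (c\<^sup>2 / 64) (xor_fun (hockey_stick n (c * sqrt n))))"
    by (rule D_oneway_U_hockey_stick_ge[OF assms])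
qed (use assms in simp_all)

end
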